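(* Let $i\ge0$, $l\ge1$, $j\ge0$, $j_1,\ldots,j_l\ge0$ and $k\ge0$ be integers. Then (a) $\displaystyle b_{i,j_1+\cdots+j_l,k}=\sum\binom{i}{i_1,\ldots,i_{l+k}}\prod_{r=1}^{l}b_{i_r,j_r,0}$, the sum being over all integers $i_1,\ldots,i_{l+k}\ge0$ with $i_1+\cdots+i_{l+k}=i$; (b) $\displaystyle b_{i,j,k}=\sum\binom{i}{i_1,\ldots,i_{j+k}}$, the sum being over all integers $i_1,\ldots,i_{j+k}\ge0$ with $i_1+\cdots+i_{j+k}=i$ and $i_1>0,\ldots,i_j>0$.
   Context: For integers $i\ge0$, $j\ge0$ and real $k$, $b_{i,j,k}=\sum_{r=0}^{j}\binom{j}{r}(-1)^{j-r}(r+k)^i$, with the convention $0^0=1$. $\binom{i}{i_1,\ldots,i_n}=\frac{i!}{i_1!\cdots i_n!}$ is the multinomial coefficient. *)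

theory Defs
  imports Complex_Main
begin

text \<open>b_{i,j,k} = sum_{r=0}^{j} (j choose r) (-1)^(j-r) (r+k)^i, with 0^0 = 1
  (Isabelle's power with natural exponent satisfies 0^0 = 1).\<close>
definition bcoef :: "nat \<Rightarrow> nat \<Rightarrow> real \<Rightarrow> real" where
  "bcoef i j k = (\<Sum>r = 0..j. real (j choose r) * (-1) ^ (j - r) * (real r + k) ^ i)"

definition multinomial :: "nat \<Rightarrow> nat list \<Rightarrow> real" where
  "multinomial i xs = fact i / (\<Prod>x\<leftarrow>xs. fact x)"

definition compositions :: "nat \<Rightarrow> nat \<Rightarrow> nat list set" where
  "compositions n i = {xs. length xs = n \<and> sum_list xs = i}"

end

theory Submission
  imports Defs
begin

text \<open>
  Writing D for the forward difference, b(i,j,k) = (D^j x^i)(k); equivalently the exponential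
  generating function of i \<mapsto> b(i,j,k) is e^(kt) (e^t - 1)^j, so multiplying such series gives
  multinomial convolutions of the b's. Without power series, the two-factor case is the binomial
  convolution  \<Sum>x C(i,x) b(x,j1,k1) b(i-x,j2,k2) = b(i,j1+j2,k1+k2),  proved by induction on
  j2 from the binomial theorem (j2 = 0) and b(i,j+1,k) = b(i,j,k+1) - b(i,j,k). Iterated over the
  entries of a composition it yields part (a) as the case of l factors b(-,j_r,0) padded by k
  factors b(-,0,1) = 1, and part (b) as the case j_1 = ... = j_j = 1, since b(x,1,0) is the
  indicator of x > 0.
\<close>

lemma (in comm_monoid_set) lessThan_add:
  fixes m n :: nat
  shows "F g {..<m + n} = F g {..<m} \<^bold>* F (\<lambda>i. g (m + i)) {..<n}"
  by (induction n) (simp_all add: assoc)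

lemma bcoef_0: "bcoef i 0 k = k ^ i"
  by (simp add: bcoef_def)

lemma bcoef_1_0: "bcoef i 1 0 = (if i = 0 then 0 else 1)"
  by (simp add: bcoef_def)

lemma bcoef_Suc: "bcoef i (Suc j) k = bcoef i j (k + 1) - bcoef i j k"
proof -
  define h where "h r = real (j choose r) * (-1) ^ (Suc j - r) * (real r + k) ^ i" for r
  have bcoef_as_h: "bcoef i j k = - (\<Sum>r\<le>j. h r)"
    by (simp add: bcoef_def h_def atLeast0AtMost sum_negf[symmetric] Suc_diff_le)
  have "(\<Sum>r\<le>Suc j. h r) = (\<Sum>r\<le>j. h r)"
    by (simp add: h_def)
  then have h_shift: "h 0 + (\<Sum>r\<le>j. h (Suc r)) = (\<Sum>r\<le>j. h r)"
    by (metis sum.atMost_Suc_shift)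
  have "bcoef i (Suc j) k
      = (\<Sum>r\<le>Suc j. real (Suc j choose r) * (-1) ^ (Suc j - r) * (real r + k) ^ i)"
    by (simp add: bcoef_def atLeast0AtMost)
  also have "\<dots> = h 0 + (\<Sum>r\<le>j. real (j choose r) * (-1) ^ (j - r) * (real r + (k + 1)) ^ i
                                  + h (Suc r))"
    by (subst sum.atMost_Suc_shift) (simp add: h_def algebra_simps)
  also have "\<dots> = bcoef i j (k + 1) + (h 0 + (\<Sum>r\<le>j. h (Suc r)))"
    by (simp add: sum.distrib bcoef_def atLeast0AtMost)
  also have "\<dots> = bcoef i j (k + 1) - bcoef i j k"
    using h_shift bcoef_as_h by simp
  finally show ?thesis .
qed

lemma bcoef_binomial_convolution:
  "(\<Sum>x\<le>i. real (i choose x) * bcoef x j1 k1 * bcoef (i - x) j2 k2) = bcoef i (j1 + j2) (k1 + k2)"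
proof (induction j2 arbitrary: k2)
  case 0
  have "(\<Sum>x\<le>i. real (i choose x) * bcoef x j1 k1 * bcoef (i - x) 0 k2)
      = (\<Sum>x\<le>i. \<Sum>r=0..j1. real (j1 choose r) * (-1) ^ (j1 - r) *
                             (real (i choose x) * (real r + k1) ^ x * k2 ^ (i - x)))"
    by (simp add: bcoef_0 bcoef_def sum_distrib_left sum_distrib_right algebra_simps)
  also have "\<dots> = (\<Sum>r=0..j1. real (j1 choose r) * (-1) ^ (j1 - r) *
                     (\<Sum>x\<le>i. real (i choose x) * (real r + k1) ^ x * k2 ^ (i - x)))"
    by (subst sum.swap) (simp add: sum_distrib_left)
  also have "\<dots> = bcoef i j1 (k1 + k2)"
    by (simp add: bcoef_def binomial_ring[symmetric] add.assoc)
  finally show ?case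
    by simp
next
  case (Suc j2)
  show ?case
    by (simp add: bcoef_Suc Suc.IH[symmetric] right_diff_distrib sum_subtractf add.assoc)
qed

lemma finite_compositions: "finite (compositions n i)"
proof (rule finite_subset)
  show "compositions n i \<subseteq> {xs. set xs \<subseteq> {..i} \<and> length xs = n}"
    by (auto simp: compositions_def member_le_sum_list)
qed (simp add: finite_lists_length_eq)

lemma compositions_0: "compositions 0 i = (if i = 0 then {[]} else {})"
  by (auto simp: compositions_def)

lemma compositions_Suc:
  "compositions (Suc n) i = (\<lambda>(x, ys). x # ys) ` (SIGMA x:{..i}. compositions n (i - x))"
proof (rule set_eqI, rule iffI)
  fix xs
  assume "xs \<in> compositions (Suc n) i"
  then obtain x ys where "xs = x # ys" "length ys = n" "x + sum_list ys = i"
    by (cases xs) (auto simp: compositions_def)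
  then show "xs \<in> (\<lambda>(x, ys). x # ys) ` (SIGMA x:{..i}. compositions n (i - x))"
    by (auto simp: compositions_def image_iff intro!: bexI[of _ "(x, ys)"])
qed (auto simp: compositions_def)

lemma sum_compositions_Suc:
  "(\<Sum>xs\<in>compositions (Suc n) i. g xs) = (\<Sum>x\<le>i. \<Sum>ys\<in>compositions n (i - x). g (x # ys))"
proof -
  have "inj_on (\<lambda>(x, ys). x # ys) (SIGMA x:{..i}. compositions n (i - x))"
    by (auto simp: inj_on_def)
  then show ?thesis
    by (simp add: compositions_Suc sum.reindex sum.Sigma finite_compositions split_def)
qed

lemma multinomial_Cons:
  "x \<le> i \<Longrightarrow> multinomial i (x # ys) = real (i choose x) * multinomial (i - x) ys"
  by (simp add: multinomial_def binomial_fact)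

lemma bcoef_multinomial_convolution:
  "(\<Sum>xs\<in>compositions n i. multinomial i xs * (\<Prod>m<n. bcoef (xs ! m) (J m) (K m)))
     = bcoef i (\<Sum>m<n. J m) (\<Sum>m<n. K m)"
proof (induction n arbitrary: i J K)
  case 0
  show ?case
    by (simp add: compositions_0 bcoef_0 multinomial_def)
next
  case (Suc n)
  have "(\<Sum>xs\<in>compositions (Suc n) i. multinomial i xs * (\<Prod>m<Suc n. bcoef (xs ! m) (J m) (K m)))
      = (\<Sum>x\<le>i. \<Sum>ys\<in>compositions n (i - x). real (i choose x) * bcoef x (J 0) (K 0) *
           (multinomial (i - x) ys * (\<Prod>m<n. bcoef (ys ! m) (J (Suc m)) (K (Suc m)))))"
    unfolding sum_compositions_Suc prod.lessThan_Suc_shift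
    by (intro sum.cong refl) (simp add: multinomial_Cons)
  also have "\<dots> = (\<Sum>x\<le>i. real (i choose x) * bcoef x (J 0) (K 0) *
                     bcoef (i - x) (\<Sum>m<n. J (Suc m)) (\<Sum>m<n. K (Suc m)))"
    by (simp add: sum_distrib_left[symmetric] Suc.IH)
  also have "\<dots> = bcoef i (\<Sum>m<Suc n. J m) (\<Sum>m<Suc n. K m)"
    by (simp only: bcoef_binomial_convolution sum.lessThan_Suc_shift)
  finally show ?case .
qed

lemma bcoef_multinomial_expansion:
  "bcoef i (\<Sum>m<n. J m) (real k)
     = (\<Sum>xs\<in>compositions (n + k) i. multinomial i xs * (\<Prod>m<n. bcoef (xs ! m) (J m) 0))"
proof -
  define J' where "J' m = (if m < n then J m else 0)" for m
  define K' where "K' m = (if m < n then 0 else 1 :: real)" for m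
  have "(\<Prod>m<n + k. bcoef (xs ! m) (J' m) (K' m)) = (\<Prod>m<n. bcoef (xs ! m) (J m) 0)" for xs
    by (simp add: prod.lessThan_add J'_def K'_def bcoef_0)
  moreover have "(\<Sum>m<n + k. J' m) = (\<Sum>m<n. J m)" "(\<Sum>m<n + k. K' m) = real k"
    by (simp_all add: sum.lessThan_add J'_def K'_def)
  ultimately show ?thesis
    using bcoef_multinomial_convolution[where n="n + k" and i=i and J=J' and K=K'] by simp
qed

theorem mainTheorem19:
  fixes i l j k :: nat and js :: "nat list"
  assumes "l \<ge> 1" and "length js = l"
  shows "(bcoef i (sum_list js) (real k) =
           (\<Sum>xs\<in>compositions (l + k) i.
              multinomial i xs * (\<Prod>r<l. bcoef (xs ! r) (js ! r) 0))) \<and>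
         (bcoef i j (real k) =
           (\<Sum>xs\<in>{xs \<in> compositions (j + k) i. \<forall>r<j. xs ! r > 0}. multinomial i xs))"
proof
  show "bcoef i (sum_list js) (real k) =
          (\<Sum>xs\<in>compositions (l + k) i. multinomial i xs * (\<Prod>r<l. bcoef (xs ! r) (js ! r) 0))"
    using bcoef_multinomial_expansion[where i=i and n=l and J="nth js" and k=k] assms(2)
    by (simp add: sum_list_sum_nth atLeast0LessThan)
next
  have indicator: "(\<Prod>r<j. bcoef (xs ! r) 1 0) = (if \<forall>r<j. xs ! r > 0 then 1 else 0)" for xs
    by (induction j) (auto simp: bcoef_1_0[unfolded One_nat_def] less_Suc_eq)
  have "bcoef i j (real k)
      = (\<Sum>xs\<in>compositions (j + k) i. multinomial i xs * (\<Prod>r<j. bcoef (xs ! r) 1 0))"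
    using bcoef_multinomial_expansion[where i=i and n=j and J="\<lambda>_. 1" and k=k] by simp
  also have "\<dots> = (\<Sum>xs\<in>compositions (j + k) i. if \<forall>r<j. xs ! r > 0 then multinomial i xs else 0)"
    by (simp only: indicator if_distrib mult_1_right mult_zero_right)
  also have "\<dots> = (\<Sum>xs\<in>{xs \<in> compositions (j + k) i. \<forall>r<j. xs ! r > 0}. multinomial i xs)"
    by (simp add: sum.inter_filter finite_compositions)
  finally show "bcoef i j (real k) =
          (\<Sum>xs\<in>{xs \<in> compositions (j + k) i. \<forall>r<j. xs ! r > 0}. multinomial i xs)" .
qed

end
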